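(* Let $m,n\ge 2$. The Hadamard product of two $m$th order $n$-dimensional complete Hankel tensors is a complete Hankel tensor.
   Context: For $w\in\mathbb{R}^n$, $w^m$ is the tensor with entries $w_{i_1}\cdots w_{i_m}$. A Vandermonde vector is $(1,u,u^2,\dots,u^{n-1})^\top$ with $u\in\mathbb{R}$. A real $m$th order $n$-dimensional tensor $\mathcal{A}$ is a complete Hankel tensor if it has a positive Vandermonde decomposition, i.e. $\mathcal{A}=\sum_{k=1}^r\alpha_k(u_k)^m$ with $\alpha_k>0$, $u_k=(1,u_k,\dots,u_k^{n-1})^\top$ Vandermonde vectors, and $u_1,\dots,u_r$ pairwise distinct. The Hadamard product of $\mathcal{A}=(a_{i_1\cdots i_m})$ and $\mathcal{B}=(b_{i_1\cdots i_m})$ is $(a_{i_1\cdots i_m}b_{i_1\cdots i_m})$. *)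

theory Defs
  imports Complex_Main
begin

text \<open>An m-th order n-dimensional real tensor is modelled as a function on index
lists; only index lists of length m with entries in {0..<n} (0-based indices)
are meaningful.\<close>

type_synonym tensor = "nat list \<Rightarrow> real"

definition valid_index :: "nat \<Rightarrow> nat \<Rightarrow> nat list \<Rightarrow> bool" where
  "valid_index m n is \<longleftrightarrow> length is = m \<and> set is \<subseteq> {..<n}"

text \<open>Entry of the rank-one tensor (v)^m where v = (1,u,...,u^(n-1)) is the
Vandermonde vector of u: its (0-based) i-th entry is u^i.\<close>

definition vandermonde :: "real \<Rightarrow> nat \<Rightarrow> real" where
  "vandermonde u i = u ^ i"

definition vandermonde_power :: "real \<Rightarrow> tensor" where
  "vandermonde_power u is = prod_list (map (vandermonde u) is)"

definition complete_Hankel :: "nat \<Rightarrow> nat \<Rightarrow> tensor \<Rightarrow> bool" where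
  "complete_Hankel m n A \<longleftrightarrow>
     (\<exists>(r::nat) (\<alpha>::nat \<Rightarrow> real) (u::nat \<Rightarrow> real).
        r \<ge> 1 \<and> (\<forall>k<r. \<alpha> k > 0) \<and> inj_on u {..<r} \<and>
        (\<forall>is. valid_index m n is \<longrightarrow>
              A is = (\<Sum>k<r. \<alpha> k * vandermonde_power (u k) is)))"

definition hadamard :: "tensor \<Rightarrow> tensor \<Rightarrow> tensor" where
  "hadamard A B = (\<lambda>is. A is * B is)"

end

theory Submission
  imports Defs
begin

text \<open>Entrywise, the product of the rank-one tensors of two Vandermonde vectors with nodes
\<open>u\<close> and \<open>v\<close> is the rank-one tensor of the Vandermonde vector with node \<open>u v\<close>. Multiplying two
positive Vandermonde decompositions therefore gives a positive combination of Vandermonde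
powers indexed by pairs of terms; nodes \<open>u\<^sub>k v\<^sub>l\<close> may coincide, and merging equal nodes
(adding their positive weights) yields a positive Vandermonde decomposition.\<close>

lemma vandermonde_power_mult:
  "vandermonde_power a is * vandermonde_power b is = vandermonde_power (a * b) is"
  by (induction "is") (simp_all add: vandermonde_power_def vandermonde_def power_mult_distrib)

lemma sum_group_by_distinct_list:
  fixes c :: "'p \<Rightarrow> 'b::comm_semiring_1" and g :: "'a \<Rightarrow> 'b"
  assumes "finite P" and "distinct xs" and "set xs = f ` P"
  shows "(\<Sum>p\<in>P. c p * g (f p)) = (\<Sum>k<length xs. (\<Sum>p\<in>{p\<in>P. f p = xs ! k}. c p) * g (xs ! k))"
proof -
  have image: "f ` P = (\<lambda>k. xs ! k) ` {..<length xs}"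
    using assms(3) by (metis atLeast_upt image_set map_nth)
  have inj: "inj_on (\<lambda>k. xs ! k) {..<length xs}"
    using assms(2) by (simp add: inj_on_def nth_eq_iff_index_eq)
  have "(\<Sum>p\<in>P. c p * g (f p)) = (\<Sum>s\<in>f ` P. \<Sum>p\<in>{p\<in>P. f p = s}. c p * g (f p))"
    by (rule sum.group[OF assms(1) finite_imageI[OF assms(1)], of f, symmetric]) simp
  also have "\<dots> = (\<Sum>s\<in>f ` P. (\<Sum>p\<in>{p\<in>P. f p = s}. c p) * g s)"
    by (rule sum.cong) (auto simp: sum_distrib_right)
  also have "\<dots> = (\<Sum>k<length xs. (\<Sum>p\<in>{p\<in>P. f p = xs ! k}. c p) * g (xs ! k))"
    unfolding image using inj by (simp add: sum.reindex)
  finally show ?thesis .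
qed

lemma complete_Hankel_if_positive_combination:
  fixes c f :: "'p \<Rightarrow> real"
  assumes "finite P" and "P \<noteq> {}" and pos: "\<forall>p\<in>P. c p > 0"
    and A: "\<forall>is. valid_index m n is \<longrightarrow> A is = (\<Sum>p\<in>P. c p * vandermonde_power (f p) is)"
  shows "complete_Hankel m n A"
proof -
  obtain xs where xs: "set xs = f ` P" "distinct xs"
    using finite_distinct_list[OF finite_imageI[OF assms(1), of f]] by blast
  define \<gamma> where "\<gamma> k = (\<Sum>p\<in>{p\<in>P. f p = xs ! k}. c p)" for k
  have "length xs \<ge> 1"
    using xs(1) assms(2) by (cases xs) auto
  moreover have "\<gamma> k > 0" if "k < length xs" for k
  proof -
    have "xs ! k \<in> f ` P" unfolding xs(1)[symmetric] using that by simp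
    then have "{p\<in>P. f p = xs ! k} \<noteq> {}" by auto
    then show ?thesis
      unfolding \<gamma>_def using assms(1) pos by (intro sum_pos) auto
  qed
  moreover have "inj_on (\<lambda>k. xs ! k) {..<length xs}"
    using xs(2) by (simp add: inj_on_def nth_eq_iff_index_eq)
  moreover have "A is = (\<Sum>k<length xs. \<gamma> k * vandermonde_power (xs ! k) is)"
    if "valid_index m n is" for "is"
    using A that sum_group_by_distinct_list[OF assms(1) xs(2,1)] by (simp add: \<gamma>_def)
  ultimately show ?thesis
    unfolding complete_Hankel_def by (intro exI[of _ "length xs"] exI[of _ \<gamma>] exI[of _ "(!) xs"]) simp
qed

theorem proposition3:
  fixes m n :: nat and A B :: tensor
  assumes "m \<ge> 2" and "n \<ge> 2"
    and "complete_Hankel m n A" and "complete_Hankel m n B"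
  shows "complete_Hankel m n (hadamard A B)"
proof -
  obtain r :: nat and a u :: "nat \<Rightarrow> real" where r: "r \<ge> 1" "\<forall>k<r. a k > 0"
    and A: "\<forall>is. valid_index m n is \<longrightarrow> A is = (\<Sum>k<r. a k * vandermonde_power (u k) is)"
    using assms(3) unfolding complete_Hankel_def by (elim exE conjE) (rule that; assumption)
  obtain s :: nat and b v :: "nat \<Rightarrow> real" where s: "s \<ge> 1" "\<forall>l<s. b l > 0"
    and B: "\<forall>is. valid_index m n is \<longrightarrow> B is = (\<Sum>l<s. b l * vandermonde_power (v l) is)"
    using assms(4) unfolding complete_Hankel_def by (elim exE conjE) (rule that; assumption)
  show ?thesis
  proof (rule complete_Hankel_if_positive_combination
      [where P = "{..<r} \<times> {..<s}" and c = "\<lambda>(k, l). a k * b l" and f = "\<lambda>(k, l). u k * v l"])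
    show "{..<r} \<times> {..<s} \<noteq> {}" using r s by (simp add: lessThan_empty_iff)
    show "\<forall>p\<in>{..<r} \<times> {..<s}. 0 < (case p of (k, l) \<Rightarrow> a k * b l)"
      using r s by auto
    show "\<forall>is. valid_index m n is \<longrightarrow> hadamard A B is =
        (\<Sum>p\<in>{..<r} \<times> {..<s}. (case p of (k, l) \<Rightarrow> a k * b l) *
           vandermonde_power (case p of (k, l) \<Rightarrow> u k * v l) is)"
      using A B by (auto simp: hadamard_def sum_product sum.cartesian_product mult_ac
          simp flip: vandermonde_power_mult intro!: sum.cong)
  qed simp
qed

end
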